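(* Consider a single base station serving $N$ static users $\mathrm{UE}_1,\ldots,\mathrm{UE}_N$ over slots $t=1,\ldots,T$. At each slot the base station schedules a transmission (of a fresh packet) to exactly one user. At each slot $t$, the channel state $\mathsf{Ch}_i(t)\in\{0,1\}$ (\textsf{Bad}$=0$, \textsf{Good}$=1$) of each user is chosen by an omniscient adversary, which may choose any of the $2^N$ state vectors at each slot; a scheduled transmission is received successfully iff the scheduled user's channel is \textsf{Good} in that slot, in which case that user's age resets to $1$, while every other age (and the scheduled user's age upon failure) increases by $1$. An online policy decides whom to schedule without any knowledge of current or future channel states (only of past outcomes). The cost of a policy on a channel-state sequence $\sigma\in(\{0,1\}^N)^T$ is $\sum_{t=1}^{T}\sum_{i=1}^{N}h_i(t)$, where $h_i(t)$ is the age of $\mathrm{UE}_i$ at slot $t$. The competitive ratio of an online policy $\mathcal{A}$ is $\eta^{\mathcal{A}}=\sup_{\sigma}\frac{\text{cost of }\mathcal{A}\text{ on }\sigma}{\text{cost of }\mathsf{OPT}\text{ on }\sigma}$, the supremum over all finite-length sequences $\sigma$, where $\mathsf{OPT}$ is the optimal offline policy knowing $\sigma$ in advance. Then the competitive ratio $\eta$ of any online scheduling policy with $N$ users satisfies $\eta\ge \frac{N}{2}+\frac{1}{2N}$. Moreover, for $N=2$ users, $\eta\ge 1.5$. *)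

theory Defs
  imports Complex_Main "HOL-Library.Extended_Real"
begin

(* Users are indexed 0..N-1; slots are indexed so that slot t+1 (t = 0,1,...)
   uses the channel-state vector  \<sigma> t  and the scheduling decision  s t.
   \<sigma> t i = True  means channel of user i is Good in that slot. *)

fun age :: "(nat \<Rightarrow> nat \<Rightarrow> bool) \<Rightarrow> (nat \<Rightarrow> nat) \<Rightarrow> nat \<Rightarrow> nat \<Rightarrow> nat" where
  "age \<sigma> s 0 i = 1"
| "age \<sigma> s (Suc t) i = (if s t = i \<and> \<sigma> t i then 1 else age \<sigma> s t i + 1)"

definition cost :: "nat \<Rightarrow> (nat \<Rightarrow> nat \<Rightarrow> bool) \<Rightarrow> (nat \<Rightarrow> nat) \<Rightarrow> nat \<Rightarrow> nat" where
  "cost N \<sigma> s T = (\<Sum>t\<in>{1..T}. \<Sum>i<N. age \<sigma> s t i)"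

definition valid_schedule :: "nat \<Rightarrow> (nat \<Rightarrow> nat) \<Rightarrow> bool" where
  "valid_schedule N s \<longleftrightarrow> (\<forall>t. s t < N)"

definition opt_cost :: "nat \<Rightarrow> (nat \<Rightarrow> nat \<Rightarrow> bool) \<Rightarrow> nat \<Rightarrow> nat" where
  "opt_cost N \<sigma> T = (INF s \<in> {s. valid_schedule N s}. cost N \<sigma> s T)"

text \<open>An online policy maps the history of past transmission outcomes
  (True = success) to the user scheduled next.\<close>
type_synonym policy = "bool list \<Rightarrow> nat"

definition valid_policy :: "nat \<Rightarrow> policy \<Rightarrow> bool" where
  "valid_policy N \<pi> \<longleftrightarrow> (\<forall>h. \<pi> h < N)"

fun outcomes :: "policy \<Rightarrow> (nat \<Rightarrow> nat \<Rightarrow> bool) \<Rightarrow> nat \<Rightarrow> bool list" where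
  "outcomes \<pi> \<sigma> 0 = []"
| "outcomes \<pi> \<sigma> (Suc t) = outcomes \<pi> \<sigma> t @ [\<sigma> t (\<pi> (outcomes \<pi> \<sigma> t))]"

definition online_schedule :: "policy \<Rightarrow> (nat \<Rightarrow> nat \<Rightarrow> bool) \<Rightarrow> nat \<Rightarrow> nat" where
  "online_schedule \<pi> \<sigma> t = \<pi> (outcomes \<pi> \<sigma> t)"

definition competitive_ratio :: "nat \<Rightarrow> policy \<Rightarrow> ereal" where
  "competitive_ratio N \<pi> =
     (SUP p \<in> (UNIV :: (nat \<times> (nat \<Rightarrow> nat \<Rightarrow> bool)) set).
        ereal (real (cost N (snd p) (online_schedule \<pi> (snd p)) (fst p))
               / real (opt_cost N (snd p) (fst p))))"

end

theory Submission
  imports Defs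
begin

text \<open>The adversary lets the online policy fail in every slot: it makes Bad exactly the user that
  the policy schedules after a history of failures, so every online age at slot \<open>t\<close> is \<open>t + 1\<close>.
  All other channels are Good, and an offline scheduler that always serves the oldest user with a
  Good channel keeps, for every \<open>k \<ge> 2\<close>, the \<open>k\<close>-th largest age at most \<open>N + 2 - k\<close>; so at
  most one offline age exceeds \<open>N\<close>. Over \<open>T = 4 N\<^sup>2\<close> slots the online cost is \<open>N S\<close> with
  \<open>S = \<Sum>\<^sub>t (t + 1) \<ge> 2 N\<^sup>2 T\<close>, whereas the offline cost is at most \<open>S + T N (N - 1)\<close>, giving
  the ratio \<open>2 N\<^sup>2 / (3 N - 1)\<close>; this is at least \<open>N / 2 + 1 / (2 N)\<close>, and equals \<open>8 / 5\<close>
  for \<open>N = 2\<close>.\<close>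

lemma age_ge_1: "1 \<le> age \<sigma> s t i"
  by (induction t) auto

lemma age_le_Suc: "age \<sigma> s t i \<le> t + 1"
  by (induction t) auto

lemma age_all_fail:
  assumes "\<And>k. \<not> \<sigma> k (s k)"
  shows "age \<sigma> s t i = t + 1"
  using assms by (induction t) auto

lemma cost_all_fail:
  assumes "\<And>k. \<not> \<sigma> k (s k)"
  shows "cost N \<sigma> s T = N * (\<Sum>t\<in>{1..T}. t + 1)"
  using assms by (simp add: cost_def age_all_fail sum_distrib_left mult.commute)

lemma cost_ge: "T * N \<le> cost N \<sigma> s T"
proof -
  have "T * N = (\<Sum>t\<in>{1..T}. \<Sum>i<N. 1)" by simp
  also have "\<dots> \<le> cost N \<sigma> s T"
    unfolding cost_def by (intro sum_mono age_ge_1)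
  finally show ?thesis .
qed

lemma opt_cost_ge:
  assumes "N \<ge> 1"
  shows "T * N \<le> opt_cost N \<sigma> T"
proof -
  have "valid_schedule N (\<lambda>_. 0)" using assms by (simp add: valid_schedule_def)
  then show ?thesis
    unfolding opt_cost_def by (intro cINF_greatest cost_ge) auto
qed

lemma cost_ratio_le_competitive_ratio:
  "ereal (real (cost N \<sigma> (online_schedule \<pi> \<sigma>) T) / real (opt_cost N \<sigma> T))
     \<le> competitive_ratio N \<pi>"
  unfolding competitive_ratio_def by (rule SUP_upper2[of "(T, \<sigma>)"]) auto

definition jam :: "policy \<Rightarrow> nat \<Rightarrow> nat \<Rightarrow> bool" where
  "jam \<pi> t i \<longleftrightarrow> i \<noteq> \<pi> (replicate t False)"

lemma outcomes_jam: "outcomes \<pi> (jam \<pi>) t = replicate t False"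
  by (induction t) (simp_all add: jam_def replicate_append_same[symmetric])

lemma online_schedule_jam_fails: "\<not> jam \<pi> t (online_schedule \<pi> (jam \<pi>) t)"
  by (simp add: jam_def online_schedule_def outcomes_jam)

definition serves_oldest_good :: "nat \<Rightarrow> (nat \<Rightarrow> nat \<Rightarrow> bool) \<Rightarrow> (nat \<Rightarrow> nat) \<Rightarrow> bool" where
  "serves_oldest_good N \<sigma> s \<longleftrightarrow>
     (\<forall>t j. j < N \<and> \<sigma> t j \<longrightarrow> \<sigma> t (s t) \<and> age \<sigma> s t j \<le> age \<sigma> s t (s t))"

lemma serves_oldest_good_age_bound:
  assumes "valid_schedule N s" and "serves_oldest_good N \<sigma> s"
    and one_bad: "\<And>t. \<exists>b. \<forall>i<N. i \<noteq> b \<longrightarrow> \<sigma> t i"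
    and "J \<subseteq> {..<N}" and "2 \<le> card J"
  shows "\<exists>i\<in>J. age \<sigma> s t i + card J \<le> N + 2"
  using assms(4,5)
proof (induction t arbitrary: J)
  case 0
  then have "card J \<le> N" "J \<noteq> {}"
    using card_mono[of "{..<N}" J] by auto
  then show ?case by auto
next
  case (Suc t)
  have "finite J" using Suc.prems finite_subset by blast
  have "card J \<le> N" using Suc.prems card_mono[of "{..<N}" J] by auto
  obtain b where b: "\<And>i. i < N \<Longrightarrow> i \<noteq> b \<Longrightarrow> \<sigma> t i" using one_bad by blast
  have "\<not> J \<subseteq> {b}"
    using Suc.prems(2) card_mono[of "{b}" J] by auto
  then obtain j where j: "j \<in> J" "j \<noteq> b" by blast
  with Suc.prems(1) b have "j < N" "\<sigma> t j" by auto
  define c where "c = s t"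
  have c: "c < N" "\<sigma> t c" "age \<sigma> s t j \<le> age \<sigma> s t c"
    using assms(1,2) \<open>j < N\<close> \<open>\<sigma> t j\<close>
    unfolding c_def valid_schedule_def serves_oldest_good_def by auto
  show ?case
  proof (cases "c \<in> J")
    case True
    then show ?thesis using c \<open>card J \<le> N\<close> by (intro bexI[of _ c]) (auto simp: c_def)
  next
    case False
    \<comment> \<open>apply the invariant to \<open>J \<union> {c}\<close>; if it picks \<open>c\<close>, then \<open>j\<close>, being no older, does as well\<close>
    then have aged: "age \<sigma> s (Suc t) k = age \<sigma> s t k + 1" if "k \<in> J" for k
      using that by (auto simp: c_def)
    have "insert c J \<subseteq> {..<N}" "2 \<le> card (insert c J)"
      using Suc.prems c \<open>finite J\<close> False by auto
    then obtain i where i: "i \<in> insert c J" "age \<sigma> s t i + card (insert c J) \<le> N + 2"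
      using Suc.IH by blast
    have card_insert: "card (insert c J) = card J + 1" using \<open>finite J\<close> False by simp
    show ?thesis
    proof (cases "i = c")
      case True
      then show ?thesis
        using i c card_insert aged[OF j(1)] by (intro bexI[of _ j]) (auto simp: j)
    next
      case False
      then show ?thesis using i card_insert aged by (intro bexI[of _ i]) auto
    qed
  qed
qed

lemma serves_oldest_good_sum_age:
  assumes "N \<ge> 1" and "valid_schedule N s" and "serves_oldest_good N \<sigma> s"
    and "\<And>t. \<exists>b. \<forall>i<N. i \<noteq> b \<longrightarrow> \<sigma> t i"
  shows "(\<Sum>i<N. age \<sigma> s t i) \<le> t + 1 + (N - 1) * N"
proof -
  have one_old: "age \<sigma> s t j \<le> N" if "i < N" "j < N" "j \<noteq> i" "N < age \<sigma> s t i" for i j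
    using serves_oldest_good_age_bound[OF assms(2-4), of "{i, j}" t] that by auto
  obtain i where i: "i < N" "\<And>j. j < N \<Longrightarrow> j \<noteq> i \<Longrightarrow> age \<sigma> s t j \<le> N"
  proof (cases "\<exists>i<N. N < age \<sigma> s t i")
    case True
    then show ?thesis using that one_old by blast
  next
    case False
    then show ?thesis using that[of 0] assms(1) by force
  qed
  have "(\<Sum>i<N. age \<sigma> s t i) = age \<sigma> s t i + (\<Sum>j\<in>{..<N} - {i}. age \<sigma> s t j)"
    using i(1) by (simp add: sum.remove)
  also have "\<dots> \<le> (t + 1) + (\<Sum>j\<in>{..<N} - {i}. N)"
    using i by (intro add_mono age_le_Suc sum_mono) auto
  also have "\<dots> = t + 1 + (N - 1) * N"
    using i(1) by simp
  finally show ?thesis .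
qed

text \<open>If no channel is Good the choice is irrelevant; \<open>0\<close> keeps the schedule valid.\<close>

definition oldest_good :: "nat \<Rightarrow> (nat \<Rightarrow> bool) \<Rightarrow> (nat \<Rightarrow> nat) \<Rightarrow> nat" where
  "oldest_good N g a = (if \<exists>i<N. g i then ARG_MAX a i. i < N \<and> g i else 0)"

lemma oldest_good:
  assumes "j < N" and "g j"
  shows "oldest_good N g a < N \<and> g (oldest_good N g a) \<and> a j \<le> a (oldest_good N g a)"
proof -
  have "\<forall>i. i < N \<and> g i \<longrightarrow> a i < Suc (Max (a ` {..<N}))"
    by (simp add: le_imp_less_Suc)
  then show ?thesis
    using assms arg_max_nat_lemma[of "\<lambda>i. i < N \<and> g i" j a]
    unfolding oldest_good_def by auto
qed

lemma oldest_good_less: "N \<ge> 1 \<Longrightarrow> oldest_good N g a < N"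
  using oldest_good[of _ N g a] unfolding oldest_good_def by (cases "\<exists>i<N. g i") auto

fun greedy_ages :: "nat \<Rightarrow> (nat \<Rightarrow> nat \<Rightarrow> bool) \<Rightarrow> nat \<Rightarrow> nat \<Rightarrow> nat" where
  "greedy_ages N \<sigma> 0 i = 1"
| "greedy_ages N \<sigma> (Suc t) i =
     (if oldest_good N (\<sigma> t) (greedy_ages N \<sigma> t) = i \<and> \<sigma> t i then 1 else greedy_ages N \<sigma> t i + 1)"

definition greedy_schedule :: "nat \<Rightarrow> (nat \<Rightarrow> nat \<Rightarrow> bool) \<Rightarrow> nat \<Rightarrow> nat" where
  "greedy_schedule N \<sigma> t = oldest_good N (\<sigma> t) (greedy_ages N \<sigma> t)"

lemma age_greedy_schedule: "age \<sigma> (greedy_schedule N \<sigma>) t i = greedy_ages N \<sigma> t i"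
  by (induction t arbitrary: i) (simp_all add: greedy_schedule_def)

lemma greedy_schedule_valid: "N \<ge> 1 \<Longrightarrow> valid_schedule N (greedy_schedule N \<sigma>)"
  by (simp add: valid_schedule_def greedy_schedule_def oldest_good_less)

lemma greedy_schedule_serves_oldest_good: "serves_oldest_good N \<sigma> (greedy_schedule N \<sigma>)"
  unfolding serves_oldest_good_def age_greedy_schedule greedy_schedule_def
  using oldest_good by blast

lemma opt_cost_le_one_bad:
  assumes "N \<ge> 1" and "\<And>t. \<exists>b. \<forall>i<N. i \<noteq> b \<longrightarrow> \<sigma> t i"
  shows "opt_cost N \<sigma> T \<le> (\<Sum>t\<in>{1..T}. t + 1) + T * ((N - 1) * N)"
proof -
  let ?s = "greedy_schedule N \<sigma>"
  have "opt_cost N \<sigma> T \<le> cost N \<sigma> ?s T"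
    unfolding opt_cost_def using greedy_schedule_valid[OF assms(1)] by (intro cINF_lower) auto
  also have "\<dots> \<le> (\<Sum>t\<in>{1..T}. t + 1 + (N - 1) * N)"
    unfolding cost_def using greedy_schedule_valid[OF assms(1)] greedy_schedule_serves_oldest_good
    by (intro sum_mono serves_oldest_good_sum_age assms) auto
  also have "\<dots> = (\<Sum>t\<in>{1..T}. t + 1) + T * ((N - 1) * N)"
    unfolding sum.distrib by simp
  finally show ?thesis .
qed

lemma sum_Suc_atLeast1AtMost: "2 * (\<Sum>t\<in>{1..T}. t + 1) = T * (T + 3 :: nat)"
  by (induction T) (auto simp: algebra_simps)

lemma ratio_bound:
  fixes N S T p :: nat
  assumes "1 \<le> N" and "0 < p" and "p \<le> S + T * ((N - 1) * N)" and "2 * N\<^sup>2 * T \<le> S"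
  shows "2 * (real N)\<^sup>2 / (3 * real N - 1) \<le> real (N * S) / real p"
proof -
  have N: "1 \<le> real N" using assms(1) by simp
  have "real p \<le> real (S + T * ((N - 1) * N))"
    using assms(3) by (rule of_nat_mono)
  then have p: "real p \<le> real S + real T * ((real N - 1) * real N)"
    using assms(1) by (simp add: of_nat_diff)
  have "real (2 * N\<^sup>2 * T) \<le> real S"
    using assms(4) by (rule of_nat_mono)
  then have "(real N - 1) * (2 * (real N)\<^sup>2 * real T) \<le> (real N - 1) * real S"
    using N by (intro mult_left_mono) auto
  then have "2 * real N * real p \<le> (3 * real N - 1) * real S"
    using N mult_left_mono[OF p, of "2 * real N"]
    by (simp add: algebra_simps power2_eq_square)
  then have "real N * (2 * real N * real p) \<le> real N * ((3 * real N - 1) * real S)"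
    using N by (intro mult_left_mono) auto
  then have "2 * (real N)\<^sup>2 * real p \<le> real N * real S * (3 * real N - 1)"
    by (simp only: power2_eq_square ac_simps)
  then show ?thesis
    using N assms(2) by (simp add: divide_simps)
qed

lemma half_plus_inverse_le_ratio:
  fixes x :: real
  assumes "1 \<le> x"
  shows "x / 2 + 1 / (2 * x) \<le> 2 * x\<^sup>2 / (3 * x - 1)"
proof -
  have "1 \<le> x\<^sup>2"
    using assms by (simp add: one_le_power)
  then have "0 \<le> (x - 1) * (x\<^sup>2 + 2 * x - 1)"
    using assms by (intro mult_nonneg_nonneg) linarith+
  then have "(x\<^sup>2 + 1) * (3 * x - 1) \<le> 2 * x * (2 * x\<^sup>2)"
    by (simp add: algebra_simps power2_eq_square power3_eq_cube)
  then show ?thesis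
    using assms by (simp add: field_simps power2_eq_square)
qed

lemma competitive_ratio_lower_bound:
  assumes "N \<ge> 1"
  shows "ereal (2 * (real N)\<^sup>2 / (3 * real N - 1)) \<le> competitive_ratio N \<pi>"
proof -
  define T where "T = 4 * N\<^sup>2"
  define S where "S = (\<Sum>t\<in>{1..T}. t + 1)"
  have online: "cost N (jam \<pi>) (online_schedule \<pi> (jam \<pi>)) T = N * S"
    unfolding S_def using online_schedule_jam_fails by (rule cost_all_fail)
  have "\<exists>b. \<forall>i<N. i \<noteq> b \<longrightarrow> jam \<pi> t i" for t
    by (auto simp: jam_def)
  then have opt_le: "opt_cost N (jam \<pi>) T \<le> S + T * ((N - 1) * N)"
    unfolding S_def using assms by (intro opt_cost_le_one_bad)
  have "0 < T * N" using assms by (simp add: T_def)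
  also have "\<dots> \<le> opt_cost N (jam \<pi>) T" using assms by (rule opt_cost_ge)
  finally have opt_pos: "0 < opt_cost N (jam \<pi>) T" .
  have "2 * N\<^sup>2 * T \<le> S"
    using sum_Suc_atLeast1AtMost[of T] by (simp add: S_def T_def power2_eq_square)
  then have "2 * (real N)\<^sup>2 / (3 * real N - 1)
      \<le> real (cost N (jam \<pi>) (online_schedule \<pi> (jam \<pi>)) T) / real (opt_cost N (jam \<pi>) T)"
    unfolding online using assms opt_pos opt_le by (intro ratio_bound)
  then show ?thesis
    using cost_ratio_le_competitive_ratio order_trans ereal_less_eq(3) by blast
qed

theorem theorem4:
  fixes N :: nat and \<pi> :: policy
  assumes "N \<ge> 1" and "valid_policy N \<pi>"
  shows "competitive_ratio N \<pi> \<ge> ereal (real N / 2 + 1 / (2 * real N))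
         \<and> (N = 2 \<longrightarrow> competitive_ratio N \<pi> \<ge> ereal (3 / 2))"
proof -
  have ratio: "ereal (2 * (real N)\<^sup>2 / (3 * real N - 1)) \<le> competitive_ratio N \<pi>"
    using assms(1) by (rule competitive_ratio_lower_bound)
  have "real N / 2 + 1 / (2 * real N) \<le> 2 * (real N)\<^sup>2 / (3 * real N - 1)"
    using assms(1) by (intro half_plus_inverse_le_ratio) simp
  moreover have "N = 2 \<Longrightarrow> 3 / 2 \<le> 2 * (real N)\<^sup>2 / (3 * real N - 1)"
    by simp
  ultimately show ?thesis
    using ratio order_trans ereal_less_eq(3) by blast
qed

end
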